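(* Let $\mathcal{S}$ be a finite thick generalized quadrangle of order $(s,t)$ with a group $G$ of automorphisms acting regularly on the points. Let $g\in G$ with $g^2\ne 1$, and let $P$ be a point with $P\sim P^g$. Let $\ell_1:=PP^{g^{-1}}$ and $\ell_2:=PP^g$. Then $\ell_1,\ell_2$ are all the lines of $\mathcal{L}_1(g)\cup\mathcal{L}_2(g)$ passing through $P$. Moreover: (1) if $P,P^g,P^{g^{-1}}$ are collinear, then $\ell_1=\ell_2$ and this line lies in $\mathcal{L}_1(g)$; (2) if $P,P^g,P^{g^{-1}}$ are not collinear, then $\ell_1,\ell_2$ are distinct and both lie in $\mathcal{L}_2(g)$.
   Context: A generalized quadrangle of order $(s,t)$: each line has $s+1$ points, each point is on $t+1$ lines, and for each non-incident point-line pair $(P,\ell)$ there is a unique point on $\ell$ collinear with $P$; thick means $\min\{s,t\}\ge2$. $P\sim Q$ means distinct collinear points; for lines, $\ell\sim m$ means distinct concurrent lines. $XY$ denotes the line through distinct collinear points $X,Y$. $\mathcal{L}_1(g)$ is the set of lines fixed by $g$, and $\mathcal{L}_2(g):=\{\ell:\ \ell^g\sim\ell\}$. *)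

theory Defs
  imports Main
begin

definition collinear :: "'p set \<Rightarrow> 'l set \<Rightarrow> ('p \<Rightarrow> 'l \<Rightarrow> bool) \<Rightarrow> 'p \<Rightarrow> 'p \<Rightarrow> bool" where
  "collinear Pts Lns I P Q \<longleftrightarrow> P \<in> Pts \<and> Q \<in> Pts \<and> P \<noteq> Q \<and> (\<exists>l\<in>Lns. I P l \<and> I Q l)"

definition concurrent :: "'p set \<Rightarrow> 'l set \<Rightarrow> ('p \<Rightarrow> 'l \<Rightarrow> bool) \<Rightarrow> 'l \<Rightarrow> 'l \<Rightarrow> bool" where
  "concurrent Pts Lns I l m \<longleftrightarrow> l \<in> Lns \<and> m \<in> Lns \<and> l \<noteq> m \<and> (\<exists>P\<in>Pts. I P l \<and> I P m)"

definition join :: "'p set \<Rightarrow> 'l set \<Rightarrow> ('p \<Rightarrow> 'l \<Rightarrow> bool) \<Rightarrow> 'p \<Rightarrow> 'p \<Rightarrow> 'l" where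
  "join Pts Lns I X Y = (THE l. l \<in> Lns \<and> I X l \<and> I Y l)"

definition gen_quad :: "'p set \<Rightarrow> 'l set \<Rightarrow> ('p \<Rightarrow> 'l \<Rightarrow> bool) \<Rightarrow> nat \<Rightarrow> nat \<Rightarrow> bool" where
  "gen_quad Pts Lns I s t \<longleftrightarrow>
     finite Pts \<and> finite Lns \<and>
     (\<forall>l\<in>Lns. card {P\<in>Pts. I P l} = s + 1) \<and>
     (\<forall>P\<in>Pts. card {l\<in>Lns. I P l} = t + 1) \<and>
     (\<forall>P\<in>Pts. \<forall>Q\<in>Pts. P \<noteq> Q \<longrightarrow> card {l\<in>Lns. I P l \<and> I Q l} \<le> 1) \<and>
     (\<forall>P\<in>Pts. \<forall>l\<in>Lns. \<not> I P l \<longrightarrow>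
        (\<exists>!Q. Q \<in> Pts \<and> I Q l \<and> collinear Pts Lns I P Q))"

definition thick_gen_quad :: "'p set \<Rightarrow> 'l set \<Rightarrow> ('p \<Rightarrow> 'l \<Rightarrow> bool) \<Rightarrow> nat \<Rightarrow> nat \<Rightarrow> bool" where
  "thick_gen_quad Pts Lns I s t \<longleftrightarrow> gen_quad Pts Lns I s t \<and> min s t \<ge> 2"

text \<open>An automorphism is a pair (action on points, action on lines) of bijections
  preserving incidence; to make them a group under composition we take them to be the
  identity outside the point/line sets.\<close>
definition automorphism :: "'p set \<Rightarrow> 'l set \<Rightarrow> ('p \<Rightarrow> 'l \<Rightarrow> bool) \<Rightarrow> ('p \<Rightarrow> 'p) \<times> ('l \<Rightarrow> 'l) \<Rightarrow> bool" where
  "automorphism Pts Lns I g \<longleftrightarrow>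
     bij_betw (fst g) Pts Pts \<and> bij_betw (snd g) Lns Lns \<and>
     (\<forall>x. x \<notin> Pts \<longrightarrow> fst g x = x) \<and> (\<forall>l. l \<notin> Lns \<longrightarrow> snd g l = l) \<and>
     (\<forall>P\<in>Pts. \<forall>l\<in>Lns. I P l \<longleftrightarrow> I (fst g P) (snd g l))"

definition aut_group :: "'p set \<Rightarrow> 'l set \<Rightarrow> ('p \<Rightarrow> 'l \<Rightarrow> bool) \<Rightarrow> (('p \<Rightarrow> 'p) \<times> ('l \<Rightarrow> 'l)) set \<Rightarrow> bool" where
  "aut_group Pts Lns I G \<longleftrightarrow>
     (\<forall>g\<in>G. automorphism Pts Lns I g) \<and> (id, id) \<in> G \<and>
     (\<forall>g\<in>G. \<forall>h\<in>G. (fst h \<circ> fst g, snd h \<circ> snd g) \<in> G) \<and>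
     (\<forall>g\<in>G. (inv (fst g), inv (snd g)) \<in> G)"

definition acts_regularly_on_points :: "'p set \<Rightarrow> (('p \<Rightarrow> 'p) \<times> ('l \<Rightarrow> 'l)) set \<Rightarrow> bool" where
  "acts_regularly_on_points Pts G \<longleftrightarrow> (\<forall>P\<in>Pts. \<forall>Q\<in>Pts. \<exists>!g. g \<in> G \<and> fst g P = Q)"

definition L1 :: "'l set \<Rightarrow> ('p \<Rightarrow> 'p) \<times> ('l \<Rightarrow> 'l) \<Rightarrow> 'l set" where
  "L1 Lns g = {l \<in> Lns. snd g l = l}"

definition L2 :: "'p set \<Rightarrow> 'l set \<Rightarrow> ('p \<Rightarrow> 'l \<Rightarrow> bool) \<Rightarrow> ('p \<Rightarrow> 'p) \<times> ('l \<Rightarrow> 'l) \<Rightarrow> 'l set" where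
  "L2 Pts Lns I g = {l \<in> Lns. concurrent Pts Lns I (snd g l) l}"

end

theory Submission
  imports Defs
begin

text \<open>Write \<open>X\<^sup>g\<close> for \<open>fst g X\<close> and \<open>l\<^sup>g\<close> for \<open>snd g l\<close>. The line
  \<open>l\<^sub>1 = PP\<^sup>g\<^sup>-\<^sup>1\<close> is mapped by \<open>g\<close> onto \<open>l\<^sub>2 = PP\<^sup>g\<close>; so \<open>l\<^sub>1\<close> and \<open>l\<^sub>1\<^sup>g\<close> share \<open>P\<close>,
  and \<open>l\<^sub>2\<close> and \<open>l\<^sub>2\<^sup>g\<close> share \<open>P\<^sup>g\<close>. Hence both lines lie in \<open>L\<^sub>1(g) \<union> L\<^sub>2(g)\<close>, in
  \<open>L\<^sub>1(g)\<close> exactly when \<open>l\<^sub>1 = l\<^sub>2\<close>. Conversely, let \<open>l \<in> L\<^sub>1(g) \<union> L\<^sub>2(g)\<close> pass through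
  \<open>P\<close> but not through \<open>P\<^sup>g\<close>. Then \<open>l\<close> is not fixed, so it meets \<open>l\<^sup>g\<close> in a point \<open>Q\<close>.
  Both \<open>Q\<close> (which lies on \<open>l\<^sup>g \<ni> P\<^sup>g\<close>) and \<open>P\<close> are points of \<open>l\<close> collinear with \<open>P\<^sup>g\<close>,
  so \<open>Q = P\<close> because a generalized quadrangle has no triangles. Thus \<open>P \<in> l\<^sup>g\<close>, i.e.
  \<open>P\<^sup>g\<^sup>-\<^sup>1 \<in> l\<close>, and \<open>l = l\<^sub>1\<close>.\<close>

locale generalized_quadrangle =
  fixes Pts :: "'p set" and Lns :: "'l set" and I :: "'p \<Rightarrow> 'l \<Rightarrow> bool" and s t :: nat
  assumes gen_quad: "gen_quad Pts Lns I s t"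
begin

lemma finite_lines: "finite Lns"
  and common_lines_card:
    "X \<in> Pts \<Longrightarrow> Y \<in> Pts \<Longrightarrow> X \<noteq> Y \<Longrightarrow> card {l\<in>Lns. I X l \<and> I Y l} \<le> 1"
  and unique_collinear_point: "X \<in> Pts \<Longrightarrow> l \<in> Lns \<Longrightarrow> \<not> I X l \<Longrightarrow>
         \<exists>!Q. Q \<in> Pts \<and> I Q l \<and> collinear Pts Lns I X Q"
  using gen_quad unfolding gen_quad_def by blast+

lemma common_line_unique:
  assumes "X \<in> Pts" "Y \<in> Pts" "X \<noteq> Y" "l \<in> Lns" "m \<in> Lns"
    and "I X l" "I Y l" "I X m" "I Y m"
  shows "l = m"
proof -
  have "finite {l\<in>Lns. I X l \<and> I Y l}" using finite_lines by simp
  moreover have "l \<in> {l\<in>Lns. I X l \<and> I Y l}" "m \<in> {l\<in>Lns. I X l \<and> I Y l}"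
    using assms by simp_all
  ultimately show ?thesis
    using common_lines_card[OF assms(1-3)] card_le_Suc0_iff_eq[of "{l\<in>Lns. I X l \<and> I Y l}"]
    by simp
qed

lemma join_eqI:
  assumes "X \<in> Pts" "Y \<in> Pts" "X \<noteq> Y" "l \<in> Lns" "I X l" "I Y l"
  shows "join Pts Lns I X Y = l"
  unfolding join_def
proof (rule the_equality)
  show "l \<in> Lns \<and> I X l \<and> I Y l" using assms by simp
  show "m = l" if "m \<in> Lns \<and> I X m \<and> I Y m" for m
    using common_line_unique[OF assms(1-3)] that assms(4-6) by blast
qed

lemma no_triangles:
  assumes "X \<in> Pts" "l \<in> Lns" "\<not> I X l"
    and "Q \<in> Pts" "I Q l" "collinear Pts Lns I X Q"
    and "Q' \<in> Pts" "I Q' l" "collinear Pts Lns I X Q'"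
  shows "Q = Q'"
  using unique_collinear_point[OF assms(1-3)] assms(4-) by blast

end

locale gq_automorphism = generalized_quadrangle Pts Lns I s t
  for Pts :: "'p set" and Lns :: "'l set" and I :: "'p \<Rightarrow> 'l \<Rightarrow> bool" and s t :: nat +
  fixes g :: "('p \<Rightarrow> 'p) \<times> ('l \<Rightarrow> 'l)"
  assumes automorphism: "automorphism Pts Lns I g"
begin

lemma point_bij: "bij_betw (fst g) Pts Pts"
  and line_bij: "bij_betw (snd g) Lns Lns"
  and point_fixed_outside: "X \<notin> Pts \<Longrightarrow> fst g X = X"
  and incidence_iff: "X \<in> Pts \<Longrightarrow> l \<in> Lns \<Longrightarrow> I (fst g X) (snd g l) \<longleftrightarrow> I X l"
  using automorphism unfolding automorphism_def by blast+

lemma point_image: "X \<in> Pts \<Longrightarrow> fst g X \<in> Pts"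
  using point_bij by (rule bij_betw_apply)

lemma line_image: "l \<in> Lns \<Longrightarrow> snd g l \<in> Lns"
  using line_bij by (rule bij_betw_apply)

lemma line_inj: "inj_on (snd g) Lns"
  using line_bij by (rule bij_betw_imp_inj_on)

lemma line_preimage:
  assumes "m \<in> Lns" obtains l where "l \<in> Lns" "snd g l = m"
  using line_bij assms unfolding bij_betw_def by (metis imageE)

lemma inv_point:
  assumes X: "X \<in> Pts"
  shows "fst g (inv (fst g) X) = X" "inv (fst g) X \<in> Pts"
proof -
  have "X \<in> range (fst g)"
    using point_bij X unfolding bij_betw_def by blast
  then show inv_eq: "fst g (inv (fst g) X) = X" by (rule f_inv_into_f)
  show "inv (fst g) X \<in> Pts"
  proof (rule ccontr)
    assume "inv (fst g) X \<notin> Pts"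
    then have "fst g (inv (fst g) X) = inv (fst g) X"
      by (rule point_fixed_outside)
    with inv_eq X \<open>inv (fst g) X \<notin> Pts\<close> show False by simp
  qed
qed

lemma collinear_image_points:
  assumes P: "P \<in> Pts" and coll: "collinear Pts Lns I P (fst g P)"
  shows "fst g P \<in> Pts" "P \<noteq> fst g P" "inv (fst g) P \<in> Pts" "P \<noteq> inv (fst g) P"
proof -
  show "fst g P \<in> Pts" "P \<noteq> fst g P" using coll unfolding collinear_def by simp_all
  then show "inv (fst g) P \<in> Pts" "P \<noteq> inv (fst g) P"
    using inv_point[OF P] by metis+
qed

lemma L2I:
  assumes "l \<in> Lns" "snd g l \<noteq> l" "Q \<in> Pts" "I Q l" "I Q (snd g l)"
  shows "l \<in> L2 Pts Lns I g"
  unfolding L2_def concurrent_def using assms line_image by blast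

lemma L1_L2_I:
  assumes "l \<in> Lns" "Q \<in> Pts" "I Q l" "I Q (snd g l)"
  shows "l \<in> L1 Lns g \<union> L2 Pts Lns I g"
  using assms L2I[OF assms(1) _ assms(2-4)] unfolding L1_def by blast

lemma L2_line_image_through_point:
  assumes P: "P \<in> Pts" and coll: "collinear Pts Lns I P (fst g P)"
    and l: "l \<in> L2 Pts Lns I g" "I P l" "\<not> I (fst g P) l"
  shows "I P (snd g l)"
proof -
  obtain Q where Q: "Q \<in> Pts" "I Q l" "I Q (snd g l)"
    and lL: "l \<in> Lns" and hl: "snd g l \<in> Lns"
    using l(1) unfolding L2_def concurrent_def by auto
  have gP: "fst g P \<in> Pts" "I (fst g P) (snd g l)"
    using P lL l(2) point_image incidence_iff by auto
  have "collinear Pts Lns I (fst g P) Q"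
    using gP Q hl l(3) unfolding collinear_def by auto
  moreover have "collinear Pts Lns I (fst g P) P"
    using coll unfolding collinear_def by auto
  ultimately have "Q = P"
    using no_triangles[OF gP(1) lL l(3)] Q P l(2) by blast
  with Q show ?thesis by simp
qed

lemma L1_L2_line_through_point:
  assumes P: "P \<in> Pts" and coll: "collinear Pts Lns I P (fst g P)"
    and l: "l \<in> L1 Lns g \<union> L2 Pts Lns I g" "I P l"
  shows "I (fst g P) l \<or> I (inv (fst g) P) l"
proof (cases "I (fst g P) l")
  case False
  have lL: "l \<in> Lns" using l(1) unfolding L1_def L2_def by blast
  have "l \<notin> L1 Lns g"
    using False incidence_iff[OF P lL] l(2) unfolding L1_def by auto
  with l False have "I P (snd g l)"
    using L2_line_image_through_point[OF P coll] by blast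
  then have "I (inv (fst g) P) l"
    using incidence_iff[OF inv_point(2)[OF P] lL] inv_point(1)[OF P] by simp
  then show ?thesis ..
qed simp

lemma joins_to_images:
  assumes P: "P \<in> Pts" and coll: "collinear Pts Lns I P (fst g P)"
  obtains l\<^sub>1 l\<^sub>2 where "l\<^sub>1 \<in> Lns" "l\<^sub>2 \<in> Lns" "snd g l\<^sub>1 = l\<^sub>2"
    "I P l\<^sub>1" "I (inv (fst g) P) l\<^sub>1" "I P l\<^sub>2" "I (fst g P) l\<^sub>2"
    "join Pts Lns I P (inv (fst g) P) = l\<^sub>1" "join Pts Lns I P (fst g P) = l\<^sub>2"
proof -
  let ?R = "inv (fst g) P"
  note gP = collinear_image_points(1,2)[OF P coll]
  and R = collinear_image_points(3,4)[OF P coll] inv_point(1)[OF P]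
  obtain l\<^sub>2 where l\<^sub>2: "l\<^sub>2 \<in> Lns" "I P l\<^sub>2" "I (fst g P) l\<^sub>2"
    using coll unfolding collinear_def by blast
  obtain l\<^sub>1 where l\<^sub>1: "l\<^sub>1 \<in> Lns" "snd g l\<^sub>1 = l\<^sub>2"
    using line_preimage[OF l\<^sub>2(1)] .
  have "I P l\<^sub>1" "I ?R l\<^sub>1"
    using incidence_iff[OF P l\<^sub>1(1)] incidence_iff[OF R(1) l\<^sub>1(1)] R(3) l\<^sub>1(2) l\<^sub>2 by simp_all
  with that l\<^sub>1 l\<^sub>2 join_eqI[OF P R(1,2)] join_eqI[OF P gP] show thesis
    by blast
qed

lemma joins_to_images_in_L1_L2:
  assumes P: "P \<in> Pts" and coll: "collinear Pts Lns I P (fst g P)"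
  shows "join Pts Lns I P (inv (fst g) P) \<in> L1 Lns g \<union> L2 Pts Lns I g"
    and "join Pts Lns I P (fst g P) \<in> L1 Lns g \<union> L2 Pts Lns I g"
    and "join Pts Lns I P (inv (fst g) P) \<noteq> join Pts Lns I P (fst g P) \<Longrightarrow>
           join Pts Lns I P (inv (fst g) P) \<in> L2 Pts Lns I g \<and>
           join Pts Lns I P (fst g P) \<in> L2 Pts Lns I g"
proof -
  obtain l\<^sub>1 l\<^sub>2
    where l: "l\<^sub>1 \<in> Lns" "l\<^sub>2 \<in> Lns" "snd g l\<^sub>1 = l\<^sub>2" "I P l\<^sub>1" "I P l\<^sub>2" "I (fst g P) l\<^sub>2"
    and joins: "join Pts Lns I P (inv (fst g) P) = l\<^sub>1" "join Pts Lns I P (fst g P) = l\<^sub>2"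
    using joins_to_images[OF P coll] by metis
  have gP: "fst g P \<in> Pts" "I (fst g P) (snd g l\<^sub>2)"
    using point_image[OF P] incidence_iff[OF P l(2)] l(5) by simp_all
  show "join Pts Lns I P (inv (fst g) P) \<in> L1 Lns g \<union> L2 Pts Lns I g"
    using L1_L2_I[OF l(1) P l(4)] l(3,5) joins(1) by simp
  show "join Pts Lns I P (fst g P) \<in> L1 Lns g \<union> L2 Pts Lns I g"
    using L1_L2_I[OF l(2) gP(1) l(6) gP(2)] joins(2) by simp
  assume "join Pts Lns I P (inv (fst g) P) \<noteq> join Pts Lns I P (fst g P)"
  then have "l\<^sub>1 \<noteq> l\<^sub>2" using joins by simp
  moreover have "snd g l\<^sub>2 \<noteq> l\<^sub>2"
    using \<open>l\<^sub>1 \<noteq> l\<^sub>2\<close> l(1-3) line_inj unfolding inj_on_def by metis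
  ultimately show "join Pts Lns I P (inv (fst g) P) \<in> L2 Pts Lns I g \<and>
      join Pts Lns I P (fst g P) \<in> L2 Pts Lns I g"
    using L2I[OF l(1) _ P l(4)] L2I[OF l(2) _ gP(1) l(6) gP(2)] l(3,5) joins by simp
qed

lemma L1_L2_lines_through_point:
  assumes P: "P \<in> Pts" and coll: "collinear Pts Lns I P (fst g P)"
  shows "{l \<in> L1 Lns g \<union> L2 Pts Lns I g. I P l}
           = {join Pts Lns I P (inv (fst g) P), join Pts Lns I P (fst g P)}"
proof -
  note gP = collinear_image_points(1,2)[OF P coll]
  and R = collinear_image_points(3,4)[OF P coll]
  have "l = join Pts Lns I P (inv (fst g) P) \<or> l = join Pts Lns I P (fst g P)"
    if l: "l \<in> L1 Lns g \<union> L2 Pts Lns I g" "I P l" for l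
  proof -
    have "l \<in> Lns" using l(1) unfolding L1_def L2_def by blast
    then show ?thesis
      using L1_L2_line_through_point[OF P coll l] join_eqI[OF P gP(1,2)] join_eqI[OF P R(1,2)] l(2)
      by metis
  qed
  moreover obtain l\<^sub>1 l\<^sub>2 where "I P l\<^sub>1" "I P l\<^sub>2"
    "join Pts Lns I P (inv (fst g) P) = l\<^sub>1" "join Pts Lns I P (fst g P) = l\<^sub>2"
    using joins_to_images[OF P coll] by metis
  ultimately show ?thesis using joins_to_images_in_L1_L2(1,2)[OF P coll] by blast
qed

lemma joins_to_images_eq:
  assumes P: "P \<in> Pts" and coll: "collinear Pts Lns I P (fst g P)"
    and l: "l \<in> Lns" "I P l" "I (fst g P) l" "I (inv (fst g) P) l"
  shows "join Pts Lns I P (inv (fst g) P) = join Pts Lns I P (fst g P)"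
    and "join Pts Lns I P (inv (fst g) P) \<in> L1 Lns g"
proof -
  note gP = collinear_image_points(1,2)[OF P coll]
  and R = collinear_image_points(3,4)[OF P coll]
  show eq: "join Pts Lns I P (inv (fst g) P) = join Pts Lns I P (fst g P)"
    using join_eqI[OF P gP l(1,2,3)] join_eqI[OF P R l(1,2,4)] by simp
  obtain l\<^sub>1 where "l\<^sub>1 \<in> Lns" "snd g l\<^sub>1 = join Pts Lns I P (fst g P)"
    "join Pts Lns I P (inv (fst g) P) = l\<^sub>1"
    using joins_to_images[OF P coll] by metis
  with eq show "join Pts Lns I P (inv (fst g) P) \<in> L1 Lns g" unfolding L1_def by simp
qed

lemma joins_to_images_neq:
  assumes P: "P \<in> Pts" and coll: "collinear Pts Lns I P (fst g P)"
    and no_line: "\<not> (\<exists>l\<in>Lns. I P l \<and> I (fst g P) l \<and> I (inv (fst g) P) l)"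
  shows "join Pts Lns I P (inv (fst g) P) \<noteq> join Pts Lns I P (fst g P)"
proof -
  obtain l\<^sub>1 l\<^sub>2 where "l\<^sub>1 \<in> Lns" "I P l\<^sub>1" "I (inv (fst g) P) l\<^sub>1" "I (fst g P) l\<^sub>2"
    "join Pts Lns I P (inv (fst g) P) = l\<^sub>1" "join Pts Lns I P (fst g P) = l\<^sub>2"
    using joins_to_images[OF P coll] by metis
  with no_line show ?thesis by auto
qed

end

theorem lemma3p6:
  fixes Pts :: "'p set" and Lns :: "'l set" and I :: "'p \<Rightarrow> 'l \<Rightarrow> bool"
    and s t :: nat and G :: "(('p \<Rightarrow> 'p) \<times> ('l \<Rightarrow> 'l)) set"
    and g :: "('p \<Rightarrow> 'p) \<times> ('l \<Rightarrow> 'l)" and P :: 'p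
  assumes gq: "thick_gen_quad Pts Lns I s t"
    and grp: "aut_group Pts Lns I G"
    and reg: "acts_regularly_on_points Pts G"
    and gG: "g \<in> G"
    and g2: "\<not> (fst g \<circ> fst g = id \<and> snd g \<circ> snd g = id)"
    and P: "P \<in> Pts"
    and coll: "collinear Pts Lns I P (fst g P)"
  shows "(let l1 = join Pts Lns I P (inv (fst g) P); l2 = join Pts Lns I P (fst g P) in
           {l \<in> L1 Lns g \<union> L2 Pts Lns I g. I P l} = {l1, l2} \<and>
           ((\<exists>l\<in>Lns. I P l \<and> I (fst g P) l \<and> I (inv (fst g) P) l)
              \<longrightarrow> l1 = l2 \<and> l1 \<in> L1 Lns g) \<and>
           (\<not> (\<exists>l\<in>Lns. I P l \<and> I (fst g P) l \<and> I (inv (fst g) P) l)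
              \<longrightarrow> l1 \<noteq> l2 \<and> l1 \<in> L2 Pts Lns I g \<and> l2 \<in> L2 Pts Lns I g))"
proof -
  interpret gq_automorphism Pts Lns I s t g
  proof
    show "gen_quad Pts Lns I s t" using gq unfolding thick_gen_quad_def by blast
    show "automorphism Pts Lns I g" using grp gG unfolding aut_group_def by blast
  qed
  let ?l\<^sub>1 = "join Pts Lns I P (inv (fst g) P)" and ?l\<^sub>2 = "join Pts Lns I P (fst g P)"
  have "(\<exists>l\<in>Lns. I P l \<and> I (fst g P) l \<and> I (inv (fst g) P) l)
      \<longrightarrow> ?l\<^sub>1 = ?l\<^sub>2 \<and> ?l\<^sub>1 \<in> L1 Lns g"
    using joins_to_images_eq[OF P coll] by blast
  moreover have "\<not> (\<exists>l\<in>Lns. I P l \<and> I (fst g P) l \<and> I (inv (fst g) P) l)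
      \<longrightarrow> ?l\<^sub>1 \<noteq> ?l\<^sub>2 \<and> ?l\<^sub>1 \<in> L2 Pts Lns I g \<and> ?l\<^sub>2 \<in> L2 Pts Lns I g"
    using joins_to_images_neq[OF P coll] joins_to_images_in_L1_L2(3)[OF P coll] by blast
  ultimately show ?thesis
    unfolding Let_def using L1_L2_lines_through_point[OF P coll] by (intro conjI)
qed

end
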